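(* Let $Z\sim N(0,1)$ and $X=H_3(Z)=Z^3-3Z$. Let $f$ be five times differentiable on $\mathbb{R}$, and suppose $\mathbb{E}|X^2f^{(i)}(X)|<\infty$ for $i=3,5$, $\mathbb{E}|Xf^{(j)}(X)|<\infty$ for $j=0,2,4$, and $\mathbb{E}|f^{(k)}(X)|<\infty$ for $k=1,3,5$. Then $$\mathbb{E}\big[486(4-X^2)f^{(5)}(X)-486Xf^{(4)}(X)-27(8-X^2)f^{(3)}(X)+99Xf''(X)+6f'(X)-Xf(X)\big]=0.$$
   Context: $f^{(0)}\equiv f$, and $f^{(k)}$ denotes the $k$-th derivative of $f$. $H_3(x)=x^3-3x$ is the third Hermite polynomial. *)

theory Defs
  imports "HOL-Probability.Probability"
begin

definition kderiv :: "nat \<Rightarrow> (real \<Rightarrow> real) \<Rightarrow> real \<Rightarrow> real" where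
  "kderiv k f = (deriv ^^ k) f"

definition H3 :: "real \<Rightarrow> real" where
  "H3 x = x ^ 3 - 3 * x"

end

theory Submission
  imports Defs
begin

text \<open>Write \<open>\<phi>\<close> for the standard normal density, \<open>A\<close> for the operator of the statement
  and \<open>F k z = f\<^sup>(\<^sup>k\<^sup>) (H3 z)\<close>. By the chain rule, \<open>\<phi> z * A f (H3 z)\<close> is the
  derivative of \<open>P = \<phi> * G\<close> for an explicit combination \<open>G\<close> of \<open>F 0, \<dots>, F 4\<close> with
  polynomial coefficients, so the expectation equals \<open>I = lim (P T - P (-T))\<close>. The hypotheses
  do not force \<open>P\<close> to vanish at infinity, so we argue indirectly. With \<open>u = \<phi> * F 0\<close> one
  has \<open>P z = S z + z * u' z\<close>, where \<open>S z / z\<close> is dominated by the integrable quantities of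
  the hypotheses; hence the odd part \<open>V t = u t - u (-t)\<close> satisfies
  \<open>V' t = (P t - P (-t)) / t - (S t - S (-t)) / t\<close>. If \<open>I \<noteq> 0\<close>, integrating from a large
  \<open>b\<close> shows that \<open>V / I\<close> grows like \<open>ln T / 2\<close>, contradicting the integrability of \<open>V\<close>
  on \<open>[2, \<infinity>)\<close>.\<close>

lemma borel_measurable_derivative:
  fixes g g' :: "real \<Rightarrow> real"
  assumes g: "\<And>x. (g has_real_derivative g' x) (at x)"
  shows "g' \<in> borel_measurable borel"
proof (rule borel_measurable_LIMSEQ_real)
  let ?q = "\<lambda>n x. (g (x + inverse (Suc n)) - g x) / inverse (Suc n)"
  show "(\<lambda>n. ?q n x) \<longlonglongrightarrow> g' x" for x
  proof -
    have "((\<lambda>h. (g (x + h) - g x) / h) \<longlongrightarrow> g' x) (at 0)"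
      using g[of x] by (simp add: DERIV_def)
    moreover have "filterlim (\<lambda>n. inverse (real (Suc n))) (at 0) sequentially"
      using LIMSEQ_inverse_real_of_nat by (simp add: filterlim_at del: of_nat_Suc)
    ultimately show ?thesis
      by (rule filterlim_compose)
  qed
  have cont: "continuous_on UNIV g"
    using g by (meson DERIV_isCont continuous_at_imp_continuous_on)
  show "?q n \<in> borel_measurable borel" for n
  proof -
    have "(\<lambda>x. g (x + inverse (Suc n))) \<in> borel_measurable borel"
      by (intro borel_measurable_continuous_onI continuous_on_compose2[OF cont] continuous_intros) auto
    moreover have "g \<in> borel_measurable borel"
      using cont by (rule borel_measurable_continuous_onI)
    ultimately show ?thesis
      by measurable
  qed
qed

lemma not_filterlim_at_top_if_set_integrable:
  fixes V :: "real \<Rightarrow> real"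
  assumes "set_integrable lborel {c..} V"
  shows "\<not> filterlim V at_top at_top"
proof
  assume "filterlim V at_top at_top"
  then obtain N where N: "\<And>t. t \<ge> N \<Longrightarrow> V t \<ge> 1"
    by (auto simp: filterlim_at_top eventually_at_top_linorder)
  define d where "d = max c N"
  have "integrable lborel (indicator {d..} :: real \<Rightarrow> real)"
  proof (rule Bochner_Integration.integrable_bound)
    show "integrable lborel (\<lambda>x. indicator {c..} x *\<^sub>R V x)"
      using assms by (simp add: set_integrable_def)
    show "AE x in lborel. norm (indicator {d..} x :: real) \<le> norm (indicator {c..} x *\<^sub>R V x)"
    proof (intro AE_I2)
      fix x show "norm (indicator {d..} x :: real) \<le> norm (indicator {c..} x *\<^sub>R V x)"
        using N[of x] by (auto simp: indicator_def d_def)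
    qed
  qed simp
  then obtain r where r: "emeasure lborel {d..} = ennreal r" "r \<ge> 0"
    by (cases "emeasure lborel {d..}") (auto simp: integrable_indicator_iff)
  have "emeasure lborel {d..d + r + 1} \<le> emeasure lborel {d..}"
    by (intro emeasure_mono) auto
  with r show False
    by simp
qed

lemma set_integral_Icc_le_set_integral_abs_Ici:
  fixes R :: "real \<Rightarrow> real"
  assumes R: "set_integrable lborel {a..} R" and "a \<le> b"
  shows "(LINT t:{b..T}|lborel. R t) \<le> (LINT t:{a..}|lborel. \<bar>R t\<bar>)"
proof -
  have R_bT: "set_integrable lborel {b..T} R"
    by (rule set_integrable_subset[OF R]) (use \<open>a \<le> b\<close> in auto)
  have "(LINT t:{b..T}|lborel. R t) \<le> (LINT t:{b..T}|lborel. \<bar>R t\<bar>)"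
    by (intro set_integral_mono R_bT set_integrable_abs) auto
  also have "\<dots> \<le> (LINT t:{a..}|lborel. \<bar>R t\<bar>)"
    unfolding set_lebesgue_integral_def using \<open>a \<le> b\<close>
    by (intro integral_mono set_integrable_abs[OF R_bT, unfolded set_integrable_def]
        set_integrable_abs[OF R, unfolded set_integrable_def]) (auto simp: indicator_def)
  finally show ?thesis .
qed

lemma ln_le_if_derivative_div:
  fixes V p R :: "real \<Rightarrow> real"
  assumes "0 < b" "b \<le> T" and p: "\<And>t. t \<in> {b..T} \<Longrightarrow> 1/2 \<le> p t"
    and V': "\<And>t. t \<in> {b..T} \<Longrightarrow> (V has_real_derivative p t / t - R t) (at t)"
    and R: "set_integrable lborel {b..T} R"
  shows "ln T / 2 - ln b / 2 \<le> V T - V b + (LINT t:{b..T}|lborel. R t)"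
proof -
  have "((\<lambda>t. p t / t - R t) has_integral V T - V b) {b..T}"
    using V' by (intro fundamental_theorem_of_calculus[OF \<open>b \<le> T\<close>])
      (simp add: has_real_derivative_iff_has_vector_derivative[symmetric] has_field_derivative_at_within)
  moreover have "(R has_integral (LINT t:{b..T}|lborel. R t)) {b..T}"
    using set_borel_integral_eq_integral[OF R] by (simp add: has_integral_integral)
  ultimately have p_int: "((\<lambda>t. p t / t) has_integral V T - V b + (LINT t:{b..T}|lborel. R t)) {b..T}"
    by (rule has_integral_eq[rotated, OF has_integral_add]) auto
  have ln_int: "((\<lambda>t. 1 / (2 * t)) has_integral ln T / 2 - ln b / 2) {b..T}"
    using \<open>0 < b\<close> by (intro fundamental_theorem_of_calculus[OF \<open>b \<le> T\<close>])
      (auto intro!: derivative_eq_intros simp: has_real_derivative_iff_has_vector_derivative[symmetric])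
  show ?thesis
  proof (rule has_integral_le[OF ln_int p_int])
    fix t assume t: "t \<in> {b..T}"
    with \<open>0 < b\<close> p[OF t] show "1 / (2 * t) \<le> p t / t"
      by (simp add: field_simps)
  qed
qed

lemma filterlim_at_top_if_derivative_div:
  fixes V p R :: "real \<Rightarrow> real"
  assumes "a > 0" and "(p \<longlongrightarrow> 1) at_top"
    and V': "\<And>t. t \<ge> a \<Longrightarrow> (V has_real_derivative p t / t - R t) (at t)"
    and R: "set_integrable lborel {a..} R"
  shows "filterlim V at_top at_top"
proof -
  have "eventually (\<lambda>t. p t > 1/2) at_top"
    using assms(2) by (rule order_tendstoD) simp
  then obtain N where N: "\<And>t. t \<ge> N \<Longrightarrow> p t > 1/2"
    by (auto simp: eventually_at_top_linorder)
  define b where "b = max a N"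
  define C where "C = (LINT t:{a..}|lborel. \<bar>R t\<bar>)"
  have lower: "V b - ln b / 2 - C + ln T / 2 \<le> V T" if "b \<le> T" for T
  proof -
    have "ln T / 2 - ln b / 2 \<le> V T - V b + (LINT t:{b..T}|lborel. R t)"
    proof (rule ln_le_if_derivative_div)
      show "set_integrable lborel {b..T} R"
        by (rule set_integrable_subset[OF R]) (auto simp: b_def)
    qed (use that \<open>a > 0\<close> N V' in \<open>auto simp: b_def less_imp_le\<close>)
    moreover have "(LINT t:{b..T}|lborel. R t) \<le> C"
      unfolding C_def using R by (rule set_integral_Icc_le_set_integral_abs_Ici) (simp add: b_def)
    ultimately show ?thesis
      by linarith
  qed
  have "filterlim (\<lambda>T. V b - ln b / 2 - C + ln T / 2) at_top at_top"
    by (intro filterlim_tendsto_add_at_top[OF tendsto_const]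
        filterlim_at_top_mult_tendsto_pos[OF tendsto_const _ ln_at_top, of "1/2", simplified])
  moreover have "eventually (\<lambda>T. V b - ln b / 2 - C + ln T / 2 \<le> V T) at_top"
    using eventually_ge_at_top[of b] by eventually_elim (rule lower)
  ultimately show ?thesis
    by (rule filterlim_at_top_mono)
qed

lemma limit_eq_0_if_derivative_div:
  fixes V p R :: "real \<Rightarrow> real"
  assumes "a > 0" and p: "(p \<longlongrightarrow> I) at_top"
    and V': "\<And>t. t \<ge> a \<Longrightarrow> (V has_real_derivative p t / t - R t) (at t)"
    and V: "set_integrable lborel {a..} V" and R: "set_integrable lborel {a..} R"
  shows "I = 0"
proof (rule ccontr)
  assume "I \<noteq> 0"
  have "filterlim (\<lambda>t. V t / I) at_top at_top"
  proof (rule filterlim_at_top_if_derivative_div[OF \<open>a > 0\<close>])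
    show "((\<lambda>t. p t / I) \<longlongrightarrow> 1) at_top"
      using tendsto_divide[OF p tendsto_const[of I]] \<open>I \<noteq> 0\<close> by simp
    show "((\<lambda>t. V t / I) has_real_derivative p t / I / t - R t / I) (at t)" if "t \<ge> a" for t
      using DERIV_cdivide[OF V'[OF that], of I] by (simp add: diff_divide_distrib mult.commute)
    show "set_integrable lborel {a..} (\<lambda>t. R t / I)"
      using R by (rule set_integrable_divide)
  qed
  moreover have "set_integrable lborel {a..} (\<lambda>t. V t / I)"
    using V by (rule set_integrable_divide)
  ultimately show False
    using not_filterlim_at_top_if_set_integrable by blast
qed

lemma set_integrable_tails_if_bounded:
  fixes g h :: "real \<Rightarrow> real"
  assumes g: "integrable lborel g" and h: "h \<in> borel_measurable borel"
    and bound: "\<And>z. c \<le> \<bar>z\<bar> \<Longrightarrow> \<bar>h z\<bar> \<le> g z"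
  shows "set_integrable lborel {c..} h" "set_integrable lborel {c..} (\<lambda>t. h (-t))"
proof -
  show "set_integrable lborel {c..} h"
    unfolding set_integrable_def
  proof (rule Bochner_Integration.integrable_bound[OF g])
    show "AE x in lborel. norm (indicator {c..} x *\<^sub>R h x) \<le> norm (g x)"
    proof (intro AE_I2)
      fix x show "norm (indicator {c..} x *\<^sub>R h x) \<le> norm (g x)"
        using bound[of x] abs_ge_self[of x] by (auto simp: indicator_def)
    qed
  qed (use h in simp)
  have "integrable lborel (\<lambda>x. g (- x))"
    using g lborel_integrable_real_affine_iff[of "-1" g 0] by simp
  then show "set_integrable lborel {c..} (\<lambda>t. h (-t))"
    unfolding set_integrable_def
  proof (rule Bochner_Integration.integrable_bound)
    show "AE x in lborel. norm (indicator {c..} x *\<^sub>R h (-x)) \<le> norm (g (-x))"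
    proof (intro AE_I2)
      fix x show "norm (indicator {c..} x *\<^sub>R h (-x)) \<le> norm (g (-x))"
        using bound[of "-x"] abs_ge_self[of x] by (auto simp: indicator_def)
    qed
  qed (use h in simp)
qed

lemma tendsto_integral_if_has_real_derivative:
  fixes F g :: "real \<Rightarrow> real"
  assumes F': "\<And>x. (F has_real_derivative g x) (at x)" and g: "integrable lborel g"
  shows "((\<lambda>T. F T - F (-T)) \<longlongrightarrow> integral\<^sup>L lborel g) at_top"
proof -
  have lim: "((\<lambda>T. LINT x:{-T..T}|lborel. g x) \<longlongrightarrow> integral\<^sup>L lborel g) at_top"
    unfolding set_lebesgue_integral_def
  proof (rule integral_dominated_convergence_at_top[where w="\<lambda>x. \<bar>g x\<bar>"])
    show "AE x in lborel. ((\<lambda>T. indicator {-T..T} x *\<^sub>R g x) \<longlongrightarrow> g x) at_top"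
    proof (intro AE_I2 tendsto_eventually)
      fix x show "eventually (\<lambda>T. indicator {-T..T} x *\<^sub>R g x = g x) at_top"
        using eventually_ge_at_top[of "\<bar>x\<bar>"] by eventually_elim (auto simp: indicator_def)
    qed
  qed (use g in \<open>auto simp: indicator_def\<close>)
  have FTC: "(LINT x:{-T..T}|lborel. g x) = F T - F (-T)" if "T \<ge> 0" for T
  proof -
    have "(g has_integral F T - F (-T)) {-T..T}"
      using that F' by (intro fundamental_theorem_of_calculus)
        (auto simp: has_real_derivative_iff_has_vector_derivative[symmetric] intro: has_field_derivative_at_within)
    moreover have "set_integrable lborel {-T..T} g"
      unfolding set_integrable_def using g by (intro integrable_mult_indicator) auto
    ultimately show ?thesis
      by (simp add: set_borel_integral_eq_integral(2) integral_unique)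
  qed
  have "eventually (\<lambda>T. (LINT x:{-T..T}|lborel. g x) = F T - F (-T)) at_top"
    using eventually_ge_at_top[of 0] by eventually_elim (rule FTC)
  with lim show ?thesis
    by (rule Lim_transform_eventually)
qed

lemma has_real_derivative_H3: "(H3 has_real_derivative 3 * x\<^sup>2 - 3) (at x)"
  unfolding H3_def[abs_def] by (auto intro!: derivative_eq_intros)

lemma borel_measurable_H3 [measurable]: "H3 \<in> borel_measurable borel"
  unfolding H3_def[abs_def] by measurable

lemma has_real_derivative_std_normal_density:
  "(std_normal_density has_real_derivative - x * std_normal_density x) (at x)"
  unfolding std_normal_density_def[abs_def] by (auto intro!: derivative_eq_intros simp: field_simps)

lemma H3_growth:
  fixes z :: real
  assumes "2 \<le> \<bar>z\<bar>"
  shows "\<bar>z\<bar> ^ 3 \<le> 4 * \<bar>H3 z\<bar>" "\<bar>z\<bar> \<le> \<bar>H3 z\<bar>" "z\<^sup>2 \<le> 2 * \<bar>H3 z\<bar>"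
    and "\<bar>H3 z\<bar> \<le> (H3 z)\<^sup>2"
proof -
  define a where "a = \<bar>z\<bar>"
  have a: "2 \<le> a" "z\<^sup>2 = a\<^sup>2"
    using assms by (simp_all add: a_def)
  have "2 * a \<le> a\<^sup>2" "2 * a\<^sup>2 \<le> a ^ 3"
    using mult_right_mono[OF a(1), of a] mult_right_mono[OF a(1), of "a\<^sup>2"] a
    by (simp_all add: power2_eq_square power3_eq_cube)
  moreover have "\<bar>H3 z\<bar> = a ^ 3 - 3 * a"
  proof -
    have "\<bar>H3 z\<bar> = a * \<bar>a\<^sup>2 - 3\<bar>"
      by (simp add: a_def H3_def abs_mult[symmetric] power2_eq_square power3_eq_cube algebra_simps)
    also have "\<dots> = a ^ 3 - 3 * a"
      using \<open>2 * a \<le> a\<^sup>2\<close> assms by (simp add: a_def power2_eq_square power3_eq_cube algebra_simps)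
    finally show ?thesis .
  qed
  ultimately show growth: "\<bar>z\<bar> ^ 3 \<le> 4 * \<bar>H3 z\<bar>" "\<bar>z\<bar> \<le> \<bar>H3 z\<bar>" "z\<^sup>2 \<le> 2 * \<bar>H3 z\<bar>"
    using a by (simp_all add: a_def[symmetric])
  show "\<bar>H3 z\<bar> \<le> (H3 z)\<^sup>2"
    using mult_left_mono[of 1 "\<bar>H3 z\<bar>" "\<bar>H3 z\<bar>"] growth(2) assms
    by (simp add: power2_eq_square abs_mult_self_eq)
qed

lemma abs_cubic_rational_le_H3:
  fixes z :: real
  assumes "2 \<le> \<bar>z\<bar>"
  shows "\<bar>a * z ^ 3 + b * z + c / z\<bar> \<le> (4 * \<bar>a\<bar> + \<bar>b\<bar> + \<bar>c\<bar>) * \<bar>H3 z\<bar>"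
proof -
  note growth = H3_growth[OF assms]
  have "\<bar>a * z ^ 3\<bar> \<le> 4 * \<bar>a\<bar> * \<bar>H3 z\<bar>"
    using mult_left_mono[OF growth(1), of "\<bar>a\<bar>"] by (simp add: abs_mult power_abs)
  moreover have "\<bar>b * z\<bar> \<le> \<bar>b\<bar> * \<bar>H3 z\<bar>"
    using mult_left_mono[OF growth(2), of "\<bar>b\<bar>"] by (simp add: abs_mult)
  moreover have "\<bar>c / z\<bar> \<le> \<bar>c\<bar> * \<bar>H3 z\<bar>"
  proof -
    have "\<bar>c / z\<bar> \<le> \<bar>c\<bar> / 1"
      unfolding abs_divide using assms by (intro divide_left_mono) auto
    also have "\<dots> \<le> \<bar>c\<bar> * \<bar>H3 z\<bar>"
      using growth(2) assms by (simp add: mult_le_cancel_left1)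
    finally show ?thesis .
  qed
  moreover have "\<bar>a * z ^ 3 + b * z + c / z\<bar> \<le> \<bar>a * z ^ 3\<bar> + \<bar>b * z\<bar> + \<bar>c / z\<bar>"
    using abs_triangle_ineq[of "a * z ^ 3 + b * z" "c / z"] abs_triangle_ineq[of "a * z ^ 3" "b * z"]
    by linarith
  ultimately show ?thesis
    unfolding distrib_right by linarith
qed

lemma kderiv_0 [simp]: "kderiv 0 f = f"
  by (simp add: kderiv_def)

definition H3_Stein_operator :: "(real \<Rightarrow> real) \<Rightarrow> real \<Rightarrow> real" where
  "H3_Stein_operator f x = 486 * (4 - x\<^sup>2) * kderiv 5 f x - 486 * x * kderiv 4 f x
     - 27 * (8 - x\<^sup>2) * kderiv 3 f x + 99 * x * kderiv 2 f x + 6 * kderiv 1 f x - x * f x"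

lemma abs_mult_le_if_abs_le:
  fixes c h x y K :: real
  assumes "\<bar>c\<bar> \<le> K * \<bar>h\<bar>"
  shows "\<bar>c * (y * x)\<bar> \<le> K * \<bar>y * (h * x)\<bar>"
  using mult_right_mono[OF assms, of "\<bar>y * x\<bar>"] by (simp add: abs_mult algebra_simps)

locale five_times_differentiable =
  fixes f :: "real \<Rightarrow> real"
  assumes has_real_derivative_kderiv:
    "\<And>k x. k < 5 \<Longrightarrow> (kderiv k f has_real_derivative kderiv (Suc k) f x) (at x)"
begin

lemma borel_measurable_kderiv [measurable]:
  assumes "k \<le> 5"
  shows "kderiv k f \<in> borel_measurable borel"
proof (cases k)
  case 0
  have "continuous_on UNIV f"
    using has_real_derivative_kderiv[of 0]
    by (metis DERIV_isCont continuous_at_imp_continuous_on kderiv_0 zero_less_numeral)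
  then show ?thesis
    using 0 by (simp add: borel_measurable_continuous_onI)
next
  case (Suc j)
  with assms show ?thesis
    using borel_measurable_derivative[OF has_real_derivative_kderiv, of j] by simp
qed

lemma borel_measurable_f [measurable]: "f \<in> borel_measurable borel"
  using borel_measurable_kderiv[of 0] by simp

lemma borel_measurable_H3_Stein_operator [measurable]: "H3_Stein_operator f \<in> borel_measurable borel"
  unfolding H3_Stein_operator_def[abs_def] by measurable

definition F :: "nat \<Rightarrow> real \<Rightarrow> real" where
  "F k z = kderiv k f (H3 z)"

lemma borel_measurable_F [measurable]: "k \<le> 5 \<Longrightarrow> F k \<in> borel_measurable borel"
  unfolding F_def[abs_def] by measurable

lemma has_real_derivative_F:
  "k < 5 \<Longrightarrow> (F k has_real_derivative F (Suc k) z * (3 * z\<^sup>2 - 3)) (at z)"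
  unfolding F_def[abs_def] by (rule DERIV_chain2[OF has_real_derivative_kderiv has_real_derivative_H3])

lemma has_real_derivative_F_numeral:
  "(F 0 has_real_derivative F 1 z * (3 * z\<^sup>2 - 3)) (at z)"
  "(F 1 has_real_derivative F 2 z * (3 * z\<^sup>2 - 3)) (at z)"
  "(F 2 has_real_derivative F 3 z * (3 * z\<^sup>2 - 3)) (at z)"
  "(F 3 has_real_derivative F 4 z * (3 * z\<^sup>2 - 3)) (at z)"
  "(F 4 has_real_derivative F 5 z * (3 * z\<^sup>2 - 3)) (at z)"
  using has_real_derivative_F[of 0 z] has_real_derivative_F[of 1 z] has_real_derivative_F[of 2 z]
    has_real_derivative_F[of 3 z] has_real_derivative_F[of 4 z]
  by (simp_all add: eval_nat_numeral)

definition P :: "real \<Rightarrow> real" where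
  "P z = std_normal_density z * ((z\<^sup>2 - 1) * F 0 z + (3 * z ^ 3 + 3 * z) * F 1 z
     + (9 * z ^ 4 - 63 * z\<^sup>2 + 162) * F 2 z + (270 * z - 54 * z ^ 3) * F 3 z
     + (- 162 * z ^ 4 + 810 * z\<^sup>2 - 648) * F 4 z)"

lemma has_real_derivative_P:
  "(P has_real_derivative std_normal_density z * H3_Stein_operator f (H3 z)) (at z)"
  unfolding P_def[abs_def]
  by (auto intro!: derivative_eq_intros has_real_derivative_F_numeral
      has_real_derivative_F_numeral(2)[unfolded One_nat_def] has_real_derivative_std_normal_density)
    (unfold H3_Stein_operator_def F_def H3_def One_nat_def kderiv_0, algebra)

definition S :: "real \<Rightarrow> real" where
  "S z = std_normal_density z * ((2 * z\<^sup>2 - 1) * F 0 z + 6 * z * F 1 z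
     + (9 * z ^ 4 - 63 * z\<^sup>2 + 162) * F 2 z + (270 * z - 54 * z ^ 3) * F 3 z
     + (- 162 * z ^ 4 + 810 * z\<^sup>2 - 648) * F 4 z)"

definition u :: "real \<Rightarrow> real" where
  "u z = std_normal_density z * F 0 z"

lemma has_real_derivative_u:
  "(u has_real_derivative std_normal_density z * ((3 * z\<^sup>2 - 3) * F 1 z - z * F 0 z)) (at z)"
  unfolding u_def[abs_def]
  by (auto intro!: derivative_eq_intros has_real_derivative_F_numeral has_real_derivative_std_normal_density)
    (simp add: algebra_simps)

lemma P_eq_S_plus_times_deriv_u: "P z = S z + z * (std_normal_density z * ((3 * z\<^sup>2 - 3) * F 1 z - z * F 0 z))"
  unfolding P_def S_def by algebra

lemma has_real_derivative_u_odd_part: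
  assumes "t \<noteq> 0"
  shows "((\<lambda>t. u t - u (-t)) has_real_derivative (P t - P (-t)) / t - (S t - S (-t)) / t) (at t)"
proof -
  have "((\<lambda>t. u t - u (-t)) has_real_derivative
      std_normal_density t * ((3 * t\<^sup>2 - 3) * F 1 t - t * F 0 t)
      + std_normal_density (-t) * ((3 * (-t)\<^sup>2 - 3) * F 1 (-t) - (-t) * F 0 (-t))) (at t)"
    by (auto intro!: derivative_eq_intros DERIV_chain2[OF has_real_derivative_u])
  then show ?thesis
    by (rule DERIV_cong) (use assms in \<open>simp add: P_eq_S_plus_times_deriv_u field_simps\<close>)
qed

definition majorant :: "real \<Rightarrow> real" where
  "majorant z = \<bar>std_normal_density z * (H3 z * F 0 z)\<bar> + \<bar>std_normal_density z * F 1 z\<bar>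
     + \<bar>std_normal_density z * (H3 z * F 2 z)\<bar> + \<bar>std_normal_density z * F 3 z\<bar>
     + \<bar>std_normal_density z * ((H3 z)\<^sup>2 * F 3 z)\<bar> + \<bar>std_normal_density z * (H3 z * F 4 z)\<bar>"

lemma abs_u_le_majorant:
  assumes "2 \<le> \<bar>z\<bar>"
  shows "\<bar>u z\<bar> \<le> majorant z"
proof -
  have "\<bar>u z\<bar> \<le> \<bar>H3 z\<bar> * \<bar>u z\<bar>"
    using H3_growth(2)[OF assms] assms by (simp add: mult_le_cancel_right1)
  also have "\<dots> = \<bar>std_normal_density z * (H3 z * F 0 z)\<bar>"
    by (simp add: u_def abs_mult)
  finally show ?thesis
    unfolding majorant_def by linarith
qed

lemma S_div_expand:
  assumes "z \<noteq> 0"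
  shows "S z / z = (2 * z - 1 / z) * (std_normal_density z * F 0 z) + 6 * (std_normal_density z * F 1 z)
    + (9 * z ^ 3 - 63 * z + 162 / z) * (std_normal_density z * F 2 z)
    + (270 - 54 * z\<^sup>2) * (std_normal_density z * F 3 z)
    + (- 162 * z ^ 3 + 810 * z - 648 / z) * (std_normal_density z * F 4 z)"
  using assms by (simp add: S_def field_simps power2_eq_square power3_eq_cube power4_eq_xxxx)

lemma abs_S_div_le_majorant:
  assumes z: "2 \<le> \<bar>z\<bar>"
  shows "\<bar>S z / z\<bar> \<le> 3000 * majorant z"
proof -
  let ?\<phi> = "std_normal_density z" and ?H = "H3 z"
  have "\<bar>2 * z - 1 / z\<bar> \<le> 3 * \<bar>?H\<bar>"
    using abs_cubic_rational_le_H3[OF z, of 0 2 "-1"] by simp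
  from abs_mult_le_if_abs_le[OF this]
  have t0: "\<bar>(2 * z - 1 / z) * (?\<phi> * F 0 z)\<bar> \<le> 3 * \<bar>?\<phi> * (?H * F 0 z)\<bar>" .
  have "\<bar>9 * z ^ 3 - 63 * z + 162 / z\<bar> \<le> 261 * \<bar>?H\<bar>"
    using abs_cubic_rational_le_H3[OF z, of 9 "-63" 162] by simp
  from abs_mult_le_if_abs_le[OF this]
  have t2: "\<bar>(9 * z ^ 3 - 63 * z + 162 / z) * (?\<phi> * F 2 z)\<bar> \<le> 261 * \<bar>?\<phi> * (?H * F 2 z)\<bar>" .
  have "\<bar>- 162 * z ^ 3 + 810 * z - 648 / z\<bar> \<le> 2106 * \<bar>?H\<bar>"
    using abs_cubic_rational_le_H3[OF z, of "-162" 810 "-648"] by simp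
  from abs_mult_le_if_abs_le[OF this]
  have t4: "\<bar>(- 162 * z ^ 3 + 810 * z - 648 / z) * (?\<phi> * F 4 z)\<bar> \<le> 2106 * \<bar>?\<phi> * (?H * F 4 z)\<bar>" .
  have "\<bar>270 - 54 * z\<^sup>2\<bar> \<le> 270 + 54 * z\<^sup>2"
    by (simp add: abs_le_iff)
  then have c3: "\<bar>270 - 54 * z\<^sup>2\<bar> \<le> 270 + 108 * ?H\<^sup>2"
    using H3_growth(3,4)[OF z] by linarith
  have "\<bar>(270 - 54 * z\<^sup>2) * (?\<phi> * F 3 z)\<bar> \<le> (270 + 108 * ?H\<^sup>2) * \<bar>?\<phi> * F 3 z\<bar>"
    unfolding abs_mult[of "270 - 54 * z\<^sup>2"] by (rule mult_right_mono[OF c3]) simp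
  also have "\<dots> = 270 * \<bar>?\<phi> * F 3 z\<bar> + 108 * \<bar>?\<phi> * (?H\<^sup>2 * F 3 z)\<bar>"
    by (simp add: abs_mult algebra_simps)
  finally have t3: "\<bar>(270 - 54 * z\<^sup>2) * (?\<phi> * F 3 z)\<bar>
      \<le> 270 * \<bar>?\<phi> * F 3 z\<bar> + 108 * \<bar>?\<phi> * (?H\<^sup>2 * F 3 z)\<bar>" .
  have tri: "\<bar>a + b + c + d + e\<bar> \<le> \<bar>a\<bar> + \<bar>b\<bar> + \<bar>c\<bar> + \<bar>d\<bar> + \<bar>e\<bar>" for a b c d e :: real
    using abs_triangle_ineq[of "a + b + c + d" e] abs_triangle_ineq[of "a + b + c" d]
      abs_triangle_ineq[of "a + b" c] abs_triangle_ineq[of a b] by linarith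
  have "z \<noteq> 0"
    using z by auto
  then have "\<bar>S z / z\<bar> \<le> \<bar>(2 * z - 1 / z) * (?\<phi> * F 0 z)\<bar> + 6 * \<bar>?\<phi> * F 1 z\<bar>
      + \<bar>(9 * z ^ 3 - 63 * z + 162 / z) * (?\<phi> * F 2 z)\<bar> + \<bar>(270 - 54 * z\<^sup>2) * (?\<phi> * F 3 z)\<bar>
      + \<bar>(- 162 * z ^ 3 + 810 * z - 648 / z) * (?\<phi> * F 4 z)\<bar>"
    using tri by (simp add: S_div_expand abs_mult[of 6])
  with t0 t2 t3 t4 show ?thesis
    unfolding majorant_def by (smt (verit) abs_ge_zero)
qed

context
  assumes integrable_H3_sq: "\<And>i. i \<in> {3, 5} \<Longrightarrow>
      integrable lborel (\<lambda>z. std_normal_density z * ((H3 z)\<^sup>2 * F i z))"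
    and integrable_H3: "\<And>j. j \<in> {0, 2, 4} \<Longrightarrow>
      integrable lborel (\<lambda>z. std_normal_density z * (H3 z * F j z))"
    and integrable_F: "\<And>k. k \<in> {1, 3, 5} \<Longrightarrow>
      integrable lborel (\<lambda>z. std_normal_density z * F k z)"
begin

lemma integrable_majorant: "integrable lborel majorant"
  unfolding majorant_def[abs_def]
  by (intro Bochner_Integration.integrable_add integrable_abs integrable_H3_sq integrable_H3 integrable_F) auto

lemma integrable_H3_Stein_operator:
  "integrable lborel (\<lambda>z. std_normal_density z * H3_Stein_operator f (H3 z))"
proof -
  let ?\<phi> = std_normal_density
  have "integrable lborel (\<lambda>z. 1944 * (?\<phi> z * F 5 z) - 486 * (?\<phi> z * ((H3 z)\<^sup>2 * F 5 z))
      - 486 * (?\<phi> z * (H3 z * F 4 z)) - 216 * (?\<phi> z * F 3 z) + 27 * (?\<phi> z * ((H3 z)\<^sup>2 * F 3 z))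
      + 99 * (?\<phi> z * (H3 z * F 2 z)) + 6 * (?\<phi> z * F 1 z) - ?\<phi> z * (H3 z * F 0 z))"
    by (intro Bochner_Integration.integrable_add Bochner_Integration.integrable_diff
        integrable_mult_right integrable_H3_sq integrable_H3 integrable_F) auto
  also have "(\<lambda>z. 1944 * (?\<phi> z * F 5 z) - 486 * (?\<phi> z * ((H3 z)\<^sup>2 * F 5 z))
      - 486 * (?\<phi> z * (H3 z * F 4 z)) - 216 * (?\<phi> z * F 3 z) + 27 * (?\<phi> z * ((H3 z)\<^sup>2 * F 3 z))
      + 99 * (?\<phi> z * (H3 z * F 2 z)) + 6 * (?\<phi> z * F 1 z) - ?\<phi> z * (H3 z * F 0 z))
      = (\<lambda>z. ?\<phi> z * H3_Stein_operator f (H3 z))"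
    by (simp add: fun_eq_iff H3_Stein_operator_def F_def algebra_simps)
  finally show ?thesis .
qed

lemma integral_H3_Stein_operator_eq_0:
  "(LINT z|lborel. std_normal_density z * H3_Stein_operator f (H3 z)) = 0"
proof (rule limit_eq_0_if_derivative_div)
  show "((\<lambda>t. P t - P (-t)) \<longlongrightarrow> (LINT z|lborel. std_normal_density z * H3_Stein_operator f (H3 z))) at_top"
    by (rule tendsto_integral_if_has_real_derivative[OF has_real_derivative_P integrable_H3_Stein_operator])
  show "((\<lambda>t. u t - u (-t)) has_real_derivative (P t - P (-t)) / t - (S t - S (-t)) / t) (at t)"
    if "2 \<le> t" for t
    using that by (intro has_real_derivative_u_odd_part) auto
  have "set_integrable lborel {2..} u" "set_integrable lborel {2..} (\<lambda>t. u (-t))"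
    by (intro set_integrable_tails_if_bounded[OF integrable_majorant] abs_u_le_majorant; simp add: u_def[abs_def])+
  then show "set_integrable lborel {2..} (\<lambda>t. u t - u (-t))"
    by (rule set_integral_diff)
  have "set_integrable lborel {2..} (\<lambda>t. S t / t)" "set_integrable lborel {2..} (\<lambda>t. S (-t) / (-t))"
    by (intro set_integrable_tails_if_bounded[of "\<lambda>z. 3000 * majorant z"] integrable_majorant abs_S_div_le_majorant
        integrable_mult_right; simp add: S_def[abs_def])+
  from set_integral_add(1)[OF this] show "set_integrable lborel {2..} (\<lambda>t. (S t - S (-t)) / t)"
    by (simp add: diff_divide_distrib)
qed simp

end

end

theorem proposition2p3:
  fixes M :: "'a measure" and Z :: "'a \<Rightarrow> real" and f :: "real \<Rightarrow> real"
  assumes "prob_space M"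
    and "distributed M lborel Z std_normal_density"
    and "\<And>k x. k < 5 \<Longrightarrow> (kderiv k f has_real_derivative kderiv (Suc k) f x) (at x)"
    and "\<And>i. i \<in> {3, 5} \<Longrightarrow>
           integrable M (\<lambda>\<omega>. (H3 (Z \<omega>))\<^sup>2 * kderiv i f (H3 (Z \<omega>)))"
    and "\<And>j. j \<in> {0, 2, 4} \<Longrightarrow>
           integrable M (\<lambda>\<omega>. H3 (Z \<omega>) * kderiv j f (H3 (Z \<omega>)))"
    and "\<And>k. k \<in> {1, 3, 5} \<Longrightarrow>
           integrable M (\<lambda>\<omega>. kderiv k f (H3 (Z \<omega>)))"
  shows "(\<integral>\<omega>. (let X = H3 (Z \<omega>) in
            486 * (4 - X\<^sup>2) * kderiv 5 f X - 486 * X * kderiv 4 f X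
            - 27 * (8 - X\<^sup>2) * kderiv 3 f X + 99 * X * kderiv 2 f X
            + 6 * kderiv 1 f X - X * f X) \<partial>M) = 0"
proof -
  interpret five_times_differentiable f
    by unfold_locales (fact assms(3))
  have integrable_lborel: "integrable lborel (\<lambda>z. std_normal_density z * g (H3 z))"
    if "integrable M (\<lambda>\<omega>. g (H3 (Z \<omega>)))" "g \<in> borel_measurable borel" for g
    using distributed_integrable[OF assms(2), of "\<lambda>z. g (H3 z)"] that by simp
  have "(LINT z|lborel. std_normal_density z * H3_Stein_operator f (H3 z)) = 0"
  proof (rule integral_H3_Stein_operator_eq_0)
    show "integrable lborel (\<lambda>z. std_normal_density z * ((H3 z)\<^sup>2 * F i z))" if "i \<in> {3, 5}" for i
      using integrable_lborel[OF assms(4)[OF that]] that by (auto simp: F_def)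
    show "integrable lborel (\<lambda>z. std_normal_density z * (H3 z * F j z))" if "j \<in> {0, 2, 4}" for j
      using integrable_lborel[OF assms(5)[OF that]] that by (auto simp: F_def)
    show "integrable lborel (\<lambda>z. std_normal_density z * F k z)" if "k \<in> {1, 3, 5}" for k
      using integrable_lborel[OF assms(6)[OF that]] that by (auto simp: F_def)
  qed
  moreover have "(LINT z|lborel. std_normal_density z * H3_Stein_operator f (H3 z))
      = (\<integral>\<omega>. H3_Stein_operator f (H3 (Z \<omega>)) \<partial>M)"
    by (rule distributed_integral[OF assms(2)]) auto
  ultimately show ?thesis
    by (simp add: H3_Stein_operator_def Let_def)
qed

end
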